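(* Let $K\ge 2$, $m\in\{1,\dots,K-1\}$, $M=\frac{m}{K}$, and $L\in\{1,\dots,K-1\}$. For integers $0\le j\le m+1$ define $$R_K(M,L,j)=1+\frac{\sum_{i=\max(0,m-L+1)}^{\min(j-1,K-L)}\binom{K-L}{i}\binom{L-1}{m-i}+\sum_{i=\max(j,m-L)}^{\min(m,K-L-1)}\binom{K-L-1}{i}\binom{L}{m-i}}{\binom{K}{m}}.$$ Then there exists a minimizer $j^*\in\arg\min_{0\le j\le m+1}R_K(M,L,j)$ satisfying $j^*=\left\lceil m\left(1-\frac{L}{K}\right)\right\rceil$.
   Context: Binomial coefficients $\binom{a}{b}$ are $0$ when $b<0$ or $b>a$, and empty sums (upper limit smaller than lower limit) are $0$. *)

theory Defs
  imports Complex_Main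
begin

definition ibinom :: "int \<Rightarrow> int \<Rightarrow> real" where
  "ibinom a b = (if 0 \<le> b \<and> b \<le> a then real (nat a choose nat b) else 0)"

text \<open>R_K(M,L,j) with M = m/K; the index i ranges over integers (empty sum if upper < lower).\<close>
definition R :: "nat \<Rightarrow> nat \<Rightarrow> nat \<Rightarrow> int \<Rightarrow> real" where
  "R K m L j = 1 +
     ((\<Sum>i\<in>{max 0 (int m - int L + 1) .. min (j - 1) (int K - int L)}.
         ibinom (int K - int L) i * ibinom (int L - 1) (int m - i))
    + (\<Sum>i\<in>{max j (int m - int L) .. min (int m) (int K - int L - 1)}.
         ibinom (int K - int L - 1) i * ibinom (int L) (int m - i)))
     / real (K choose m)"

end

theory Submission
  imports Defs
begin

text \<open>Write n = K - L. Up to the constant denominator C(K,m), R(j) is a fixed sum plus the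
  partial sum over i < j of d(i) = a(i) - b(i), where a and b are the summands of the two sums
  in R (the index bounds only cut off vanishing terms). The absorption identities for binomial
  coefficients give n L d(i) = (K i - m n) C(n,i) C(L,m-i), so d is non-positive below m n / K
  and non-negative from there on. Hence the partial sums are minimal at the sign change
  \<lceil>m n / K\<rceil> = \<lceil>m (1 - L/K)\<rceil>.\<close>

lemma choose_exchange_identity:
  fixes n L m j :: nat
  assumes "j \<le> m"
  shows "real n * real L *
           (real (n choose j) * real ((L - 1) choose (m - j))
            - real ((n - 1) choose j) * real (L choose (m - j)))
         = (real (n + L) * real j - real m * real n)
           * real (n choose j) * real (L choose (m - j))"
proof (cases "j \<le> n \<and> m - j \<le> L")
  case True
  let ?x = "real (n choose j)" and ?y = "real ((n - 1) choose j)"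
    and ?u = "real ((L - 1) choose (m - j))" and ?v = "real (L choose (m - j))"
  have absorb_n: "real (n - j) * ?x = real n * ?y"
    using binomial_absorb_comp[of n j] by (metis of_nat_mult)
  have absorb_L: "real (L - (m - j)) * ?v = real L * ?u"
    using binomial_absorb_comp[of L "m - j"] by (metis of_nat_mult)
  have "real n * real L * (?x * ?u - ?y * ?v) = real n * ?x * (real L * ?u) - real L * ?v * (real n * ?y)"
    by (simp add: algebra_simps)
  also have "\<dots> = (real n * real (L - (m - j)) - real L * real (n - j)) * ?x * ?v"
    unfolding absorb_n [symmetric] absorb_L [symmetric] by (simp add: algebra_simps)
  also have "\<dots> = (real (n + L) * real j - real m * real n) * ?x * ?v"
  proof -
    have "real (L - (m - j)) = real L + real j - real m" "real (n - j) = real n - real j"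
      using True assms by auto
    then show ?thesis by (simp add: algebra_simps)
  qed
  finally show ?thesis .
next
  case False
  then show ?thesis by (auto simp: binomial_eq_0)
qed

lemma choose_exchange_nonneg:
  fixes n L m j :: nat
  assumes "n \<ge> 1" "L \<ge> 1" "j \<le> m" "m * n \<le> (n + L) * j"
  shows "real ((n - 1) choose j) * real (L choose (m - j))
           \<le> real (n choose j) * real ((L - 1) choose (m - j))"
proof -
  have "real m * real n \<le> real (n + L) * real j"
    using assms(4) by (metis of_nat_le_iff of_nat_mult)
  then have "0 \<le> real n * real L *
           (real (n choose j) * real ((L - 1) choose (m - j))
            - real ((n - 1) choose j) * real (L choose (m - j)))"
    unfolding choose_exchange_identity [OF assms(3)] by simp
  moreover have "0 < real n * real L" using assms(1,2) by simp
  ultimately show ?thesis by (simp add: zero_le_mult_iff)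
qed

lemma choose_exchange_nonpos:
  fixes n L m j :: nat
  assumes "n \<ge> 1" "L \<ge> 1" "j \<le> m" "(n + L) * j < m * n"
  shows "real (n choose j) * real ((L - 1) choose (m - j))
           \<le> real ((n - 1) choose j) * real (L choose (m - j))"
proof -
  have "real (n + L) * real j < real m * real n"
    using assms(4) by (metis of_nat_less_iff of_nat_mult)
  then have "real n * real L *
           (real (n choose j) * real ((L - 1) choose (m - j))
            - real ((n - 1) choose j) * real (L choose (m - j))) \<le> 0"
    unfolding choose_exchange_identity [OF assms(3)]
    by (simp add: mult_nonpos_nonneg)
  moreover have "0 < real n * real L" using assms(1,2) by simp
  ultimately show ?thesis using assms(1,2) by (auto simp: mult_le_0_iff)
qed

lemma partial_sums_min_at_sign_change:
  fixes d :: "int \<Rightarrow> real"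
  assumes "0 \<le> k" "k \<le> N"
    and below: "\<And>i. 0 \<le> i \<Longrightarrow> i < k \<Longrightarrow> d i \<le> 0"
    and above: "\<And>i. k \<le> i \<Longrightarrow> i < N \<Longrightarrow> 0 \<le> d i"
    and "0 \<le> j" "j \<le> N"
  shows "(\<Sum>i\<in>{0..<k}. d i) \<le> (\<Sum>i\<in>{0..<j}. d i)"
proof (cases "k \<le> j")
  case True
  then have "{0..<j} = {0..<k} \<union> {k..<j}" using assms(1) by auto
  then have "(\<Sum>i\<in>{0..<j}. d i) = (\<Sum>i\<in>{0..<k}. d i) + (\<Sum>i\<in>{k..<j}. d i)"
    by (simp add: sum.union_disjoint)
  moreover have "0 \<le> (\<Sum>i\<in>{k..<j}. d i)"
    using assms(6) by (intro sum_nonneg above) auto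
  ultimately show ?thesis by simp
next
  case False
  then have "{0..<k} = {0..<j} \<union> {j..<k}" using assms(5) by auto
  then have "(\<Sum>i\<in>{0..<k}. d i) = (\<Sum>i\<in>{0..<j}. d i) + (\<Sum>i\<in>{j..<k}. d i)"
    by (simp add: sum.union_disjoint)
  moreover have "(\<Sum>i\<in>{j..<k}. d i) \<le> 0"
    using assms(5) by (intro sum_nonpos below) auto
  ultimately show ?thesis by simp
qed

definition R_lower_summand :: "nat \<Rightarrow> nat \<Rightarrow> nat \<Rightarrow> int \<Rightarrow> real" where
  "R_lower_summand K m L i = ibinom (int K - int L) i * ibinom (int L - 1) (int m - i)"

definition R_upper_summand :: "nat \<Rightarrow> nat \<Rightarrow> nat \<Rightarrow> int \<Rightarrow> real" where
  "R_upper_summand K m L i = ibinom (int K - int L - 1) i * ibinom (int L) (int m - i)"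

lemma ibinom_of_nat [simp]: "ibinom (int p) (int q) = real (p choose q)"
  unfolding ibinom_def by auto

lemma R_lower_summand_of_nat:
  assumes "L \<ge> 1" "L \<le> K" "j \<le> m"
  shows "R_lower_summand K m L (int j) = real ((K - L) choose j) * real ((L - 1) choose (m - j))"
proof -
  have "int K - int L = int (K - L)" "int L - 1 = int (L - 1)" "int m - int j = int (m - j)"
    using assms by auto
  then show ?thesis unfolding R_lower_summand_def by (simp only: ibinom_of_nat)
qed

lemma R_upper_summand_of_nat:
  assumes "L < K" "j \<le> m"
  shows "R_upper_summand K m L (int j) = real ((K - L - 1) choose j) * real (L choose (m - j))"
proof -
  have "int K - int L - 1 = int (K - L - 1)" "int m - int j = int (m - j)"
    using assms by auto
  then show ?thesis unfolding R_upper_summand_def by (simp only: ibinom_of_nat)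
qed

lemma R_eq_partial_sum:
  assumes "0 \<le> j" "j \<le> int m + 1"
  shows "R K m L j = 1 + ((\<Sum>i\<in>{0..int m}. R_upper_summand K m L i)
           + (\<Sum>i\<in>{0..<j}. R_lower_summand K m L i - R_upper_summand K m L i))
           / real (K choose m)"
proof -
  let ?a = "R_lower_summand K m L" and ?b = "R_upper_summand K m L"
  have lower: "(\<Sum>i\<in>{max 0 (int m - int L + 1) .. min (j - 1) (int K - int L)}. ?a i)
                = (\<Sum>i\<in>{0..<j}. ?a i)"
    by (rule sum.mono_neutral_left) (auto simp: R_lower_summand_def ibinom_def)
  have upper: "(\<Sum>i\<in>{max j (int m - int L) .. min (int m) (int K - int L - 1)}. ?b i)
                = (\<Sum>i\<in>{j..int m}. ?b i)"
    by (rule sum.mono_neutral_left) (auto simp: R_upper_summand_def ibinom_def)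
  have "{0..int m} = {0..<j} \<union> {j..int m}" using assms by auto
  then have "(\<Sum>i\<in>{0..int m}. ?b i) = (\<Sum>i\<in>{0..<j}. ?b i) + (\<Sum>i\<in>{j..int m}. ?b i)"
    by (simp only:) (rule sum.union_disjoint; auto)
  then have "(\<Sum>i\<in>{0..<j}. ?a i) + (\<Sum>i\<in>{j..int m}. ?b i)
               = (\<Sum>i\<in>{0..int m}. ?b i) + (\<Sum>i\<in>{0..<j}. ?a i - ?b i)"
    by (simp add: sum_subtractf)
  then show ?thesis
    unfolding R_def R_lower_summand_def [symmetric] R_upper_summand_def [symmetric] lower upper
    by (rule arg_cong [where f = "\<lambda>x. 1 + x / real (K choose m)"])
qed

lemma R_le_R_of_partial_sum_le:
  assumes "0 \<le> j" "j \<le> int m + 1" "0 \<le> k" "k \<le> int m + 1"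
    and "(\<Sum>i\<in>{0..<j}. R_lower_summand K m L i - R_upper_summand K m L i)
           \<le> (\<Sum>i\<in>{0..<k}. R_lower_summand K m L i - R_upper_summand K m L i)"
  shows "R K m L j \<le> R K m L k"
  using assms(5) unfolding R_eq_partial_sum [OF assms(1,2)] R_eq_partial_sum [OF assms(3,4)]
  by (intro add_left_mono divide_right_mono) auto

lemma R_summand_diff_nonpos:
  assumes "1 \<le> L" "L < K" "j \<le> m" "K * j < m * (K - L)"
  shows "R_lower_summand K m L (int j) \<le> R_upper_summand K m L (int j)"
  using choose_exchange_nonpos [of "K - L" L j m] assms
  by (simp add: R_lower_summand_of_nat R_upper_summand_of_nat)

lemma R_summand_diff_nonneg:
  assumes "1 \<le> L" "L < K" "j \<le> m" "m * (K - L) \<le> K * j"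
  shows "R_upper_summand K m L (int j) \<le> R_lower_summand K m L (int j)"
  using choose_exchange_nonneg [of "K - L" L j m] assms
  by (simp add: R_lower_summand_of_nat R_upper_summand_of_nat)

lemma ceiling_mult_one_minus_le_iff:
  fixes K m L :: nat and i :: int
  assumes "L \<le> K" "K > 0"
  shows "\<lceil>real m * (1 - real L / real K)\<rceil> \<le> i \<longleftrightarrow> int (m * (K - L)) \<le> int K * i"
proof -
  have "real m * (1 - real L / real K) = real (m * (K - L)) / real K"
    using assms by (simp add: field_simps of_nat_diff)
  then have "\<lceil>real m * (1 - real L / real K)\<rceil> \<le> i
               \<longleftrightarrow> real (m * (K - L)) \<le> real K * real_of_int i"
    using assms(2) by (simp add: ceiling_le_iff field_simps)
  also have "\<dots> \<longleftrightarrow> int (m * (K - L)) \<le> int K * i"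
    by (metis of_int_le_iff of_int_mult of_int_of_nat_eq)
  finally show ?thesis .
qed

theorem proposition1:
  fixes K m L :: nat
  assumes "K \<ge> 2" and "1 \<le> m" and "m \<le> K - 1" and "1 \<le> L" and "L \<le> K - 1"
  shows "\<exists>js \<in> {0 .. int m + 1}.
           (\<forall>j \<in> {0 .. int m + 1}. R K m L js \<le> R K m L j) \<and>
           js = \<lceil>real m * (1 - real L / real K)\<rceil>"
proof -
  define js where "js = \<lceil>real m * (1 - real L / real K)\<rceil>"
  have js_le_iff: "js \<le> i \<longleftrightarrow> int (m * (K - L)) \<le> int K * i" for i
    unfolding js_def using assms by (intro ceiling_mult_one_minus_le_iff) auto
  have js_le_nat_iff: "js \<le> int j \<longleftrightarrow> m * (K - L) \<le> K * j" for j
    unfolding js_le_iff by (metis of_nat_le_iff of_nat_mult)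
  have "0 \<le> real m * (1 - real L / real K)" using assms by simp
  then have js_nonneg: "0 \<le> js" unfolding js_def by linarith
  have "m * (K - L) \<le> K * m" by (simp add: diff_mult_distrib2 mult.commute)
  then have js_range: "0 \<le> js" "js \<le> int m" using js_nonneg js_le_nat_iff [of m] by auto
  have "R K m L js \<le> R K m L j" if "0 \<le> j" "j \<le> int m + 1" for j
  proof (rule R_le_R_of_partial_sum_le [OF _ _ that])
    show "(\<Sum>i\<in>{0..<js}. R_lower_summand K m L i - R_upper_summand K m L i)
           \<le> (\<Sum>i\<in>{0..<j}. R_lower_summand K m L i - R_upper_summand K m L i)"
    proof (rule partial_sums_min_at_sign_change [OF js_range(1) _ _ _ that])
      show "R_lower_summand K m L i - R_upper_summand K m L i \<le> 0" if "0 \<le> i" "i < js" for i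
        using R_summand_diff_nonpos [of L K "nat i" m] js_le_nat_iff [of "nat i"] that js_range assms
        by simp
      show "0 \<le> R_lower_summand K m L i - R_upper_summand K m L i" if "js \<le> i" "i < int m + 1" for i
        using R_summand_diff_nonneg [of L K "nat i" m] js_le_nat_iff [of "nat i"] that js_range assms
        by simp
    qed (use js_range in simp)
  qed (use js_range in simp_all)
  with js_range show ?thesis unfolding js_def by auto
qed

end
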